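(* Let $\mathbb{F}$ be a field, $n\ge 1$, and $A,B\in M(n,\mathbb{F})$. Then $A\sim_{M(n,\mathbb{F})} B$ if and only if $A_s$ and $B_s$ are conjugate by an invertible matrix, i.e. there exists $g\in \mathrm{GL}(n,\mathbb{F})$ with $B_s=gA_sg^{-1}$.
   Context: $M(n,\mathbb{F})$ denotes the semigroup of all $n\times n$ matrices over $\mathbb{F}$ under ordinary matrix multiplication, identified with linear operators on $\mathbb{F}^n$; its group of units is $\mathrm{GL}(n,\mathbb{F})$. Two elements $a,b$ of a semigroup $S$ are primarily $S$-conjugated if there are $x,y\in S$ with $a=xy$ and $b=yx$; the relation $\sim_S$ ($S$-conjugacy) is the transitive closure of primary $S$-conjugacy. For $A\in M(n,\mathbb{F})$ let $t\ge 0$ be such that $A^t(\mathbb{F}^n)=A^{t+i}(\mathbb{F}^n)$ for all $i\ge 0$ (such $t$ exists, e.g. $t=n$); then $\mathbb{F}^n=A^t(\mathbb{F}^n)\oplus\ker(A^t)$, and $A_s$ denotes the linear operator with $A_s(v)=A(v)$ for $v\in A^t(\mathbb{F}^n)$ and $A_s(v)=0$ for $v\in\ker(A^t)$ (this does not depend on the choice of such $t$). *)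

theory Defs
  imports "HOL-Analysis.Analysis"
begin

text \<open>Square matrices over a field: type 'a^'n^'n, 'n a finite (nonempty) index type, so n = CARD('n) \<ge> 1.\<close>

definition primary_conj :: "('a::field)^'n^'n \<Rightarrow> 'a^'n^'n \<Rightarrow> bool" where
  "primary_conj a b \<longleftrightarrow> (\<exists>x y. a = x ** y \<and> b = y ** x)"

definition mconj :: "('a::field)^'n^'n \<Rightarrow> 'a^'n^'n \<Rightarrow> bool" where
  "mconj = tranclp primary_conj"

definition mat_pow :: "('a::field)^'n^'n \<Rightarrow> nat \<Rightarrow> 'a^'n^'n" where
  "mat_pow A k = (((**) A) ^^ k) (mat 1)"

text \<open>A_s, using t = n (= CARD('n)): acts as A on the image of A^t and as 0 on the kernel of A^t.\<close>
definition stable_part :: "('a::field)^'n^'n \<Rightarrow> 'a^'n^'n" where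
  "stable_part A = (THE S.
      (\<forall>v. S *v (mat_pow A CARD('n) *v v) = A *v (mat_pow A CARD('n) *v v)) \<and>
      (\<forall>v. mat_pow A CARD('n) *v v = 0 \<longrightarrow> S *v v = 0))"

end

theory Submission
  imports Defs
begin

text \<open>
  Let \<open>U\<^sub>A = A\<^sup>n(F\<^sup>n)\<close> and \<open>K\<^sub>A = ker A\<^sup>n\<close>. The descending chain of images and the ascending
  chain of kernels of the powers of \<open>A\<close> stabilise after at most \<open>n\<close> steps, which gives the
  Fitting decomposition \<open>F\<^sup>n = U\<^sub>A \<oplus> K\<^sub>A\<close>; \<open>A\<close> is invertible on \<open>U\<^sub>A\<close> and \<open>A\<^sub>s\<close> is \<open>A\<close> on \<open>U\<^sub>A\<close>
  and \<open>0\<close> on \<open>K\<^sub>A\<close>.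

  If \<open>P\<close> and \<open>Q\<close> are projections onto \<open>A\<^sup>j\<^sup>+\<^sup>1(F\<^sup>n)\<close> and \<open>A\<^sup>j(F\<^sup>n)\<close>, then \<open>A Q = P (A Q)\<close> and
  \<open>A P = (A Q) P\<close>, so \<open>A Q\<close> and \<open>A P\<close> are primarily conjugate. Going up from \<open>Q = 1\<close> to the
  projection onto \<open>U\<^sub>A\<close> along \<open>K\<^sub>A\<close> shows \<open>A \<sim> A\<^sub>s\<close>; as conjugate matrices
  \<open>X\<close> and \<open>g X g\<^sup>-\<^sup>1 = (g X) g\<^sup>-\<^sup>1\<close> are primarily conjugate, conjugate stable parts
  give \<open>A \<sim> A\<^sub>s \<sim> B\<^sub>s \<sim> B\<close>.

  Conversely, for \<open>a = x y\<close> and \<open>b = y x\<close> the map \<open>y\<close> sends \<open>U\<^sub>a\<close> isomorphically onto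
  \<open>U\<^sub>b\<close> and intertwines \<open>a\<close> and \<open>b\<close>, so \<open>dim K\<^sub>a = dim K\<^sub>b\<close>. Gluing \<open>y\<close> on \<open>U\<^sub>a\<close> with any
  isomorphism \<open>K\<^sub>a \<rightarrow> K\<^sub>b\<close> gives an invertible \<open>g\<close> with \<open>b\<^sub>s g = g a\<^sub>s\<close>; by transitivity of
  conjugacy, \<open>A \<sim> B\<close> forces \<open>A\<^sub>s\<close> and \<open>B\<^sub>s\<close> to be conjugate.
\<close>

section \<open>Linear algebra in \<open>F\<^sup>n\<close>\<close>

lemma vec_dim_le_card: "vec.dim (S :: ('a::field^'n) set) \<le> CARD('n)"
  by (metis vec.dim_subset_UNIV vec.dimension_def card_cart_basis)

lemma subspace_matrix_kernel: "vec.subspace {v. M *v v = 0}"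
proof -
  have "{v. M *v v = 0} = (\<lambda>v. M *v v) -` {0}" by auto
  then show ?thesis using vec.subspace_vimage[OF vec.subspace_single_0] by simp
qed

lemma dim_image_matrix_inj_on:
  assumes "vec.subspace S" and "inj_on ((*v) M) S"
  shows "vec.dim ((*v) M ` S) = vec.dim S"
  using vec.dim_image_eq[OF matrix_vector_mul_linear_gen, of M S] assms vec.span_eq_iff
  by metis

lemma bounded_incseq_nat_repeats:
  fixes f :: "nat \<Rightarrow> nat"
  assumes mono: "\<And>k. f k \<le> f (Suc k)" and bound: "\<And>k. f k \<le> N"
  shows "\<exists>k\<le>N. f (Suc k) = f k"
proof (rule ccontr)
  assume "\<not> ?thesis"
  then have "f k < f (Suc k)" if "k \<le> N" for k
    using mono[of k] that by (metis order_le_neq_trans)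
  then have "k \<le> f k" if "k \<le> Suc N" for k
    using that by (induction k) (auto simp: Suc_le_eq intro: le_less_trans)
  then show False
    using bound[of "Suc N"] by (metis not_less_eq_eq order_refl order_trans)
qed

lemma subspace_chain_stabilizes_inc:
  fixes S :: "nat \<Rightarrow> ('a::field^'n) set"
  assumes sub: "\<And>k. vec.subspace (S k)" and inc: "\<And>k. S k \<subseteq> S (Suc k)"
  shows "\<exists>k\<le>CARD('n). S (Suc k) = S k"
proof -
  obtain k where "k \<le> CARD('n)" "vec.dim (S (Suc k)) = vec.dim (S k)"
    using bounded_incseq_nat_repeats[of "\<lambda>k. vec.dim (S k)"] vec.dim_subset[OF inc]
      vec_dim_le_card
    by blast
  then show ?thesis
    using vec.subspace_dim_equal[OF sub sub inc, of k] by auto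
qed

lemma subspace_chain_stabilizes_dec:
  fixes S :: "nat \<Rightarrow> ('a::field^'n) set"
  assumes sub: "\<And>k. vec.subspace (S k)" and dec: "\<And>k. S (Suc k) \<subseteq> S k"
  shows "\<exists>k\<le>CARD('n). S (Suc k) = S k"
proof -
  obtain k where "k \<le> CARD('n)"
    and "CARD('n) - vec.dim (S (Suc k)) = CARD('n) - vec.dim (S k)"
    using bounded_incseq_nat_repeats[of "\<lambda>k. CARD('n) - vec.dim (S k)"] vec.dim_subset[OF dec]
    by (meson diff_le_mono2 diff_le_self)
  then have "vec.dim (S (Suc k)) = vec.dim (S k)"
    using vec_dim_le_card[of "S k"] vec_dim_le_card[of "S (Suc k)"] by linarith
  then show ?thesis
    using vec.subspace_dim_equal[OF sub sub dec, of k] \<open>k \<le> CARD('n)\<close> by auto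
qed

lemma recurrence_const_from_repeat:
  assumes rec: "\<And>m. S (Suc m) = F (S m)" and repeat: "S (Suc k) = S k" and "k \<le> m"
  shows "S m = S k"
  using \<open>k \<le> m\<close>
proof (induction m rule: dec_induct)
  case (step m)
  then show ?case using rec[of m] rec[of k] repeat by simp
qed simp

lemma matrix_factor_through_range:
  fixes B :: "'a::field^'n^'m" and C :: "'a^'k^'m"
  assumes "range ((*v) B) \<subseteq> range ((*v) C)"
  shows "\<exists>Z. B = C ** Z"
proof -
  have "\<forall>j. \<exists>z. B *v axis j 1 = C *v z"
    using assms by blast
  then obtain z where z: "\<And>j. B *v axis j 1 = C *v z j"
    by metis
  have "B $ i $ j = (C ** (\<chi> i j. z j $ i)) $ i $ j" for i j
    using arg_cong[OF z, of "\<lambda>v. v $ i"]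
    by (simp add: matrix_matrix_mult_def matrix_vector_mult_def axis_def if_distrib cong: if_cong)
  then show ?thesis by (auto simp: vec_eq_iff)
qed

definition projection_onto :: "('a::field)^'n^'n \<Rightarrow> ('a^'n) set \<Rightarrow> bool" where
  "projection_onto P W \<longleftrightarrow> (\<forall>v. P *v v \<in> W) \<and> (\<forall>w\<in>W. P *v w = w)"

lemma projection_onto_exists:
  fixes W :: "('a::field^'n) set"
  assumes W: "vec.subspace W"
  shows "\<exists>P. projection_onto P W"
proof -
  obtain B where B: "B \<subseteq> W" "vec.independent B" "W \<subseteq> vec.span B"
    using vec.basis_exists[of W] by metis
  let ?f = "vec.construct B id"
  have lin: "Vector_Spaces.linear (*s) (*s) ?f"
    by (rule vec.linear_construct[OF B(2)])
  have span: "vec.span B = W"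
    using B W vec.span_eq_iff vec.span_mono by blast
  have "?f w = id w" if "w \<in> W" for w
    by (rule vec.linear_eq_on[OF lin vec.linear_id])
      (use that span in \<open>auto simp: vec.construct_basis[OF B(2)]\<close>)
  moreover have "range ?f = W"
    using vec.range_construct_eq_span[OF B(2), of id] span by simp
  ultimately have "projection_onto (matrix ?f) W"
    unfolding projection_onto_def matrix_works[OF lin] by auto
  then show ?thesis ..
qed

lemma matrix_maps_subspace_onto:
  fixes S T :: "('a::field^'n) set"
  assumes S: "vec.subspace S" and T: "vec.subspace T" and dim: "vec.dim S = vec.dim T"
  shows "\<exists>H. (*v) H ` S = T"
proof -
  obtain B where B: "B \<subseteq> S" "vec.independent B" "S \<subseteq> vec.span B" "card B = vec.dim S"
    using vec.basis_exists[of S] by metis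
  obtain C where C: "C \<subseteq> T" "vec.independent C" "T \<subseteq> vec.span C" "card C = vec.dim T"
    using vec.basis_exists[of T] by metis
  obtain h where h: "Vector_Spaces.linear (*s) (*s) h" "h ` S = T"
    using vec.basis_to_basis_subspace_isomorphism[OF S T dim B C] by blast
  then have "(*v) (matrix h) ` S = T"
    using matrix_works[OF h(1)] by (metis image_cong)
  then show ?thesis ..
qed

section \<open>The Fitting decomposition\<close>

lemma mat_pow_Suc: "mat_pow A (Suc k) = A ** mat_pow A k"
  by (simp add: mat_pow_def)

lemma mat_pow_add: "mat_pow A (j + k) = mat_pow A j ** mat_pow A k"
  by (induction j) (simp_all add: mat_pow_Suc mat_pow_def matrix_mul_assoc)

lemma mat_pow_Suc_right: "mat_pow A (Suc k) = mat_pow A k ** A"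
  using mat_pow_add[of A k 1] by (simp add: mat_pow_Suc mat_pow_def)

lemma mat_pow_mult_swap: "y ** mat_pow (x ** y) k = mat_pow (y ** x) k ** y"
proof (induction k)
  case (Suc k)
  have "y ** mat_pow (x ** y) (Suc k) = (y ** x) ** (y ** mat_pow (x ** y) k)"
    by (simp add: mat_pow_Suc matrix_mul_assoc)
  also have "\<dots> = mat_pow (y ** x) (Suc k) ** y"
    by (simp add: Suc mat_pow_Suc matrix_mul_assoc)
  finally show ?case .
qed (simp add: mat_pow_def)

lemma range_mat_pow_stable:
  fixes A :: "('a::field)^'n^'n"
  assumes "CARD('n) \<le> m"
  shows "range ((*v) (mat_pow A m)) = range ((*v) (mat_pow A CARD('n)))"
proof -
  let ?R = "\<lambda>k. range ((*v) (mat_pow A k))"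
  have rec: "?R (Suc k) = (*v) A ` ?R k" for k
    by (auto simp: mat_pow_Suc matrix_vector_mul_assoc image_iff)
  have "?R (Suc k) \<subseteq> ?R k" for k
    by (auto simp: mat_pow_Suc_right matrix_vector_mul_assoc[symmetric])
  then obtain k where k: "k \<le> CARD('n)" "?R (Suc k) = ?R k"
    using subspace_chain_stabilizes_dec[of ?R] vec.subspace_UNIV[THEN vec.subspace_image]
    by blast
  show ?thesis
    using recurrence_const_from_repeat[of ?R, OF rec k(2)] k(1) order_trans[OF k(1) assms]
    by metis
qed

lemma kernel_mat_pow_stable:
  fixes A :: "('a::field)^'n^'n"
  assumes "CARD('n) \<le> m"
  shows "{v. mat_pow A m *v v = 0} = {v. mat_pow A CARD('n) *v v = 0}"
proof -
  let ?K = "\<lambda>k. {v. mat_pow A k *v v = 0}"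
  have rec: "?K (Suc k) = (*v) A -` ?K k" for k
    by (auto simp: mat_pow_Suc_right matrix_vector_mul_assoc)
  have "?K k \<subseteq> ?K (Suc k)" for k
    by (auto simp: mat_pow_Suc matrix_vector_mul_assoc[symmetric])
  then obtain k where k: "k \<le> CARD('n)" "?K (Suc k) = ?K k"
    using subspace_chain_stabilizes_inc[of ?K] subspace_matrix_kernel by blast
  show ?thesis
    using recurrence_const_from_repeat[of ?K, OF rec k(2)] k(1) order_trans[OF k(1) assms]
    by metis
qed

definition stable_image :: "('a::field)^'n^'n \<Rightarrow> ('a^'n) set" where
  "stable_image A = range ((*v) (mat_pow A CARD('n)))"

definition stable_kernel :: "('a::field)^'n^'n \<Rightarrow> ('a^'n) set" where
  "stable_kernel A = {v. mat_pow A CARD('n) *v v = 0}"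

lemma subspace_stable_image: "vec.subspace (stable_image A)"
  unfolding stable_image_def by (rule vec.subspace_image[OF vec.subspace_UNIV])

lemma subspace_stable_kernel: "vec.subspace (stable_kernel A)"
  unfolding stable_kernel_def by (rule subspace_matrix_kernel)

lemma stable_image_Int_stable_kernel:
  fixes A :: "('a::field)^'n^'n"
  shows "stable_image A \<inter> stable_kernel A = {0}"
proof -
  have "u = 0" if img: "u \<in> stable_image A" and ker: "u \<in> stable_kernel A" for u
  proof -
    let ?M = "mat_pow A CARD('n)"
    obtain w where u: "u = ?M *v w" using img by (auto simp: stable_image_def)
    have "mat_pow A (CARD('n) + CARD('n)) *v w = 0"
      using ker by (simp add: u stable_kernel_def mat_pow_add matrix_vector_mul_assoc)
    then show "u = 0" using kernel_mat_pow_stable[of "CARD('n) + CARD('n)" A] u by auto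
  qed
  then show ?thesis using subspace_stable_image subspace_stable_kernel
    by (auto intro: vec.subspace_0)
qed

lemma stable_image_invariant:
  fixes A :: "('a::field)^'n^'n"
  assumes "u \<in> stable_image A"
  shows "A *v u \<in> stable_image A"
proof -
  obtain w where "u = mat_pow A CARD('n) *v w" using assms by (auto simp: stable_image_def)
  then have "A *v u = mat_pow A (Suc CARD('n)) *v w"
    by (simp add: mat_pow_Suc matrix_vector_mul_assoc)
  also have "\<dots> = mat_pow A CARD('n) *v (A *v w)"
    by (simp add: mat_pow_Suc_right matrix_vector_mul_assoc)
  finally show ?thesis by (simp add: stable_image_def)
qed

lemma inj_on_stable_image:
  fixes A :: "('a::field)^'n^'n"
  shows "inj_on ((*v) A) (stable_image A)"
proof (rule inj_onI)
  fix u v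
  assume u: "u \<in> stable_image A" and v: "v \<in> stable_image A" and eq: "A *v u = A *v v"
  obtain m where m: "CARD('n) = Suc m" using gr0_implies_Suc[OF zero_less_card_finite] by blast
  have "mat_pow A CARD('n) *v (u - v) = mat_pow A m *v (A *v (u - v))"
    unfolding m by (simp add: mat_pow_Suc_right matrix_vector_mul_assoc)
  also have "\<dots> = 0"
    using eq by (simp add: matrix_vector_mult_diff_distrib)
  finally have "u - v \<in> stable_kernel A"
    by (simp add: stable_kernel_def)
  moreover have "u - v \<in> stable_image A"
    using u v by (rule vec.subspace_diff[OF subspace_stable_image])
  ultimately have "u - v = 0"
    using stable_image_Int_stable_kernel[of A] by blast
  then show "u = v" by simp
qed

definition fitting_projection :: "('a::field)^'n^'n \<Rightarrow> 'a^'n^'n \<Rightarrow> bool" where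
  "fitting_projection A E \<longleftrightarrow> (\<forall>v. E *v v \<in> stable_image A \<and> v - E *v v \<in> stable_kernel A)"

lemma fitting_projection_exists:
  fixes A :: "('a::field)^'n^'n"
  shows "\<exists>E. fitting_projection A E"
proof -
  let ?M = "mat_pow A CARD('n)"
  have "range ((*v) ?M) \<subseteq> range ((*v) (?M ** ?M))"
    using range_mat_pow_stable[of "CARD('n) + CARD('n)" A] by (simp add: mat_pow_add)
  then obtain Z where Z: "?M = ?M ** ?M ** Z"
    using matrix_factor_through_range by blast
  have "fitting_projection A (?M ** Z)"
    unfolding fitting_projection_def stable_image_def stable_kernel_def
  proof (intro allI conjI)
    fix v
    show "(?M ** Z) *v v \<in> range ((*v) ?M)"
      by (simp add: matrix_vector_mul_assoc[symmetric])
    have "?M *v ((?M ** Z) *v v) = ?M *v v"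
      by (metis Z matrix_vector_mul_assoc matrix_mul_assoc)
    then show "v - (?M ** Z) *v v \<in> {v. ?M *v v = 0}"
      by (simp add: vec.diff)
  qed
  then show ?thesis ..
qed

lemma fitting_projection_on_image:
  assumes "fitting_projection A E" and "u \<in> stable_image A"
  shows "E *v u = u"
proof -
  have "u - E *v u \<in> stable_image A"
    using assms subspace_stable_image by (auto simp: fitting_projection_def intro: vec.subspace_diff)
  moreover have "u - E *v u \<in> stable_kernel A"
    using assms(1) by (simp add: fitting_projection_def)
  ultimately have "u - E *v u = 0"
    using stable_image_Int_stable_kernel[of A] by blast
  then show ?thesis by simp
qed

lemma fitting_projection_on_kernel:
  assumes "fitting_projection A E" and "k \<in> stable_kernel A"
  shows "E *v k = 0"
proof -
  have "k - E *v k \<in> stable_kernel A"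
    using assms(1) by (simp add: fitting_projection_def)
  from vec.subspace_diff[OF subspace_stable_kernel assms(2) this]
  have "E *v k \<in> stable_kernel A" by simp
  then show ?thesis
    using assms(1) stable_image_Int_stable_kernel[of A]
    by (blast dest: fitting_projection_def[THEN iffD1])
qed

lemma matrix_eq_on_fitting_decomposition:
  fixes A :: "('a::field)^'n^'n" and X Y :: "'a^'n^'m"
  assumes "\<And>u. u \<in> stable_image A \<Longrightarrow> X *v u = Y *v u"
    and "\<And>k. k \<in> stable_kernel A \<Longrightarrow> X *v k = Y *v k"
  shows "X = Y"
proof -
  obtain E where E: "fitting_projection A E"
    using fitting_projection_exists by blast
  have "X *v v = Y *v v" for v
  proof -
    have "X *v v = X *v (E *v v) + X *v (v - E *v v)"
      by (simp add: vec.diff)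
    also have "\<dots> = Y *v (E *v v) + Y *v (v - E *v v)"
      using E assms by (simp add: fitting_projection_def)
    finally show ?thesis
      by (simp add: vec.diff)
  qed
  then show ?thesis
    by (simp add: matrix_eq)
qed

lemma dim_stable_image_add_dim_stable_kernel:
  fixes A :: "('a::field)^'n^'n"
  shows "vec.dim (stable_image A) + vec.dim (stable_kernel A) = CARD('n)"
proof -
  obtain E where E: "fitting_projection A E"
    using fitting_projection_exists by blast
  have "v \<in> {u + k |u k. u \<in> stable_image A \<and> k \<in> stable_kernel A}" for v
  proof -
    have "v = E *v v + (v - E *v v)" by simp
    then show ?thesis using E unfolding fitting_projection_def by blast
  qed
  then have "{u + k |u k. u \<in> stable_image A \<and> k \<in> stable_kernel A} = UNIV"
    by blast
  then show ?thesis
    using vec.dim_sums_Int[OF subspace_stable_image subspace_stable_kernel, of A A]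
    by (simp add: stable_image_Int_stable_kernel card_cart_basis)
qed

section \<open>The stable part\<close>

lemma stable_part_eq_mult_fitting_projection:
  fixes A :: "('a::field)^'n^'n"
  assumes E: "fitting_projection A E"
  shows "stable_part A = A ** E"
  unfolding stable_part_def
proof (rule the_equality)
  let ?M = "mat_pow A CARD('n)"
  show "(\<forall>v. (A ** E) *v (?M *v v) = A *v (?M *v v)) \<and>
        (\<forall>v. ?M *v v = 0 \<longrightarrow> (A ** E) *v v = 0)"
    using fitting_projection_on_image[OF E] fitting_projection_on_kernel[OF E]
    by (simp add: stable_image_def stable_kernel_def matrix_vector_mul_assoc[symmetric] vec.zero)
  fix S
  assume S: "(\<forall>v. S *v (?M *v v) = A *v (?M *v v)) \<and> (\<forall>v. ?M *v v = 0 \<longrightarrow> S *v v = 0)"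
  show "S = A ** E"
  proof (rule matrix_eq_on_fitting_decomposition[of A])
    fix u
    assume "u \<in> stable_image A"
    then show "S *v u = (A ** E) *v u"
      using S fitting_projection_on_image[OF E]
      by (auto simp: stable_image_def matrix_vector_mul_assoc[symmetric])
  next
    fix k
    assume "k \<in> stable_kernel A"
    then show "S *v k = (A ** E) *v k"
      using S fitting_projection_on_kernel[OF E]
      by (simp add: stable_kernel_def matrix_vector_mul_assoc[symmetric] vec.zero)
  qed
qed

lemma stable_part_on_image:
  fixes A :: "('a::field)^'n^'n"
  assumes "u \<in> stable_image A"
  shows "stable_part A *v u = A *v u"
proof -
  obtain E where "fitting_projection A E" using fitting_projection_exists by blast
  then show ?thesis
    using assms fitting_projection_on_image stable_part_eq_mult_fitting_projection
    by (metis matrix_vector_mul_assoc)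
qed

lemma stable_part_on_kernel:
  fixes A :: "('a::field)^'n^'n"
  assumes "k \<in> stable_kernel A"
  shows "stable_part A *v k = 0"
proof -
  obtain E where "fitting_projection A E" using fitting_projection_exists by blast
  then show ?thesis
    using assms fitting_projection_on_kernel stable_part_eq_mult_fitting_projection
    by (metis matrix_vector_mul_assoc vec.zero)
qed

lemma primary_conj_sym: "primary_conj A B \<Longrightarrow> primary_conj B A"
  unfolding primary_conj_def by blast

lemma primary_conj_rtranclp_sym: "primary_conj\<^sup>*\<^sup>* A B \<Longrightarrow> primary_conj\<^sup>*\<^sup>* B A"
  by (induction rule: rtranclp_induct)
    (auto intro: converse_rtranclp_into_rtranclp primary_conj_sym)

lemma primary_conj_mult_projection:
  assumes "projection_onto P (range ((*v) (mat_pow A j)))"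
  shows "primary_conj\<^sup>*\<^sup>* A (A ** P)"
  using assms
proof (induction j arbitrary: P)
  case 0
  then have "P = mat 1"
    by (simp add: matrix_eq projection_onto_def mat_pow_def)
  then show ?case by simp
next
  case (Suc j)
  obtain Q where Q: "projection_onto Q (range ((*v) (mat_pow A j)))"
    using projection_onto_exists[OF vec.subspace_image[OF vec.subspace_UNIV]] by blast
  have "A ** Q = P ** (A ** Q)"
  proof -
    have "A *v (Q *v v) \<in> range ((*v) (mat_pow A (Suc j)))" for v
    proof -
      obtain w where "Q *v v = mat_pow A j *v w"
        using Q by (auto simp: projection_onto_def)
      then show ?thesis by (simp add: mat_pow_Suc matrix_vector_mul_assoc)
    qed
    then have "P *v (A *v (Q *v v)) = A *v (Q *v v)" for v
      using Suc.prems unfolding projection_onto_def by blast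
    then show ?thesis
      by (simp add: matrix_eq matrix_vector_mul_assoc[symmetric])
  qed
  moreover have "A ** P = (A ** Q) ** P"
  proof -
    have "P *v v \<in> range ((*v) (mat_pow A j))" for v
    proof -
      obtain w where "P *v v = mat_pow A (Suc j) *v w"
        using Suc.prems unfolding projection_onto_def by blast
      then have "P *v v = mat_pow A j *v (A *v w)"
        by (simp add: mat_pow_Suc_right matrix_vector_mul_assoc)
      then show ?thesis by blast
    qed
    then have "Q *v (P *v v) = P *v v" for v
      using Q unfolding projection_onto_def by blast
    then show ?thesis
      by (simp add: matrix_eq matrix_vector_mul_assoc[symmetric])
  qed
  ultimately have "primary_conj (A ** Q) (A ** P)"
    unfolding primary_conj_def by blast
  with Suc.IH[OF Q] show ?case ..
qed

lemma primary_conj_stable_part: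
  fixes A :: "('a::field)^'n^'n"
  shows "primary_conj\<^sup>*\<^sup>* A (stable_part A)"
proof -
  obtain E where E: "fitting_projection A E"
    using fitting_projection_exists by blast
  then have "projection_onto E (range ((*v) (mat_pow A CARD('n))))"
    using fitting_projection_on_image[OF E]
    by (simp add: projection_onto_def fitting_projection_def stable_image_def)
  then show ?thesis
    using primary_conj_mult_projection stable_part_eq_mult_fitting_projection[OF E] by metis
qed

section \<open>Stable parts of \<open>x y\<close> and \<open>y x\<close>\<close>

lemma stable_image_mult_swap_subset:
  fixes x y :: "('a::field)^'n^'n"
  shows "(*v) y ` stable_image (x ** y) \<subseteq> stable_image (y ** x)"
proof
  fix v
  assume "v \<in> (*v) y ` stable_image (x ** y)"
  then obtain w where "v = y *v (mat_pow (x ** y) CARD('n) *v w)"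
    by (auto simp: stable_image_def)
  also have "\<dots> = mat_pow (y ** x) CARD('n) *v (y *v w)"
    by (simp add: matrix_vector_mul_assoc mat_pow_mult_swap)
  finally show "v \<in> stable_image (y ** x)"
    by (simp add: stable_image_def)
qed

lemma inj_on_stable_image_mult_swap:
  fixes x y :: "('a::field)^'n^'n"
  shows "inj_on ((*v) y) (stable_image (x ** y))"
proof -
  have "(*v) (x ** y) = (*v) x \<circ> (*v) y"
    by (auto simp: matrix_vector_mul_assoc)
  then show ?thesis
    using inj_on_stable_image[of "x ** y"] by (metis inj_on_imageI2)
qed

lemma image_stable_image_mult_swap:
  fixes x y :: "('a::field)^'n^'n"
  shows "(*v) y ` stable_image (x ** y) = stable_image (y ** x)"
proof -
  have dim_image: "vec.dim ((*v) y ` stable_image (x ** y)) = vec.dim (stable_image (x ** y))"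
    for x y :: "'a^'n^'n"
    by (rule dim_image_matrix_inj_on[OF subspace_stable_image inj_on_stable_image_mult_swap])
  have "vec.dim (stable_image (x ** y)) \<le> vec.dim (stable_image (y ** x))"
    for x y :: "'a^'n^'n"
    using vec.dim_subset[OF stable_image_mult_swap_subset] dim_image by metis
  then show ?thesis
    using vec.subspace_dim_equal[OF vec.subspace_image[OF subspace_stable_image]
        subspace_stable_image stable_image_mult_swap_subset] dim_image
    by (metis order_refl)
qed

lemma glue_on_fitting_decomposition:
  fixes A B y H :: "('a::field)^'n^'n"
  assumes image: "(*v) y ` stable_image A = stable_image B"
    and kernel: "(*v) H ` stable_kernel A = stable_kernel B"
  obtains g where "invertible g"
    and "\<And>u. u \<in> stable_image A \<Longrightarrow> g *v u = y *v u"
    and "\<And>k. k \<in> stable_kernel A \<Longrightarrow> g *v k = H *v k"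
proof -
  obtain Ea where Ea: "fitting_projection A Ea"
    using fitting_projection_exists by blast
  obtain Eb where Eb: "fitting_projection B Eb"
    using fitting_projection_exists by blast
  define g where "g = y ** Ea + H ** (mat 1 - Ea)"
  have g: "g *v v = y *v (Ea *v v) + H *v (v - Ea *v v)" for v
    by (simp add: g_def matrix_vector_mult_add_rdistrib matrix_vector_mult_diff_rdistrib
        matrix_vector_mul_assoc[symmetric])
  have g_image: "g *v u = y *v u" if "u \<in> stable_image A" for u
    using fitting_projection_on_image[OF Ea that] by (simp add: g)
  have g_kernel: "g *v k = H *v k" if "k \<in> stable_kernel A" for k
    using fitting_projection_on_kernel[OF Ea that] by (simp add: g)
  have "w \<in> range ((*v) g)" for w
  proof -
    have "Eb *v w \<in> (*v) y ` stable_image A"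
      using Eb image by (simp add: fitting_projection_def)
    then obtain u where u: "u \<in> stable_image A" "Eb *v w = y *v u" by blast
    have "w - Eb *v w \<in> (*v) H ` stable_kernel A"
      using Eb kernel by (simp add: fitting_projection_def)
    then obtain k where k: "k \<in> stable_kernel A" "w - Eb *v w = H *v k" by blast
    have "g *v (u + k) = Eb *v w + (w - Eb *v w)"
      using g_image[OF u(1)] g_kernel[OF k(1)] u(2) k(2)
      by (simp add: matrix_vector_right_distrib)
    then show ?thesis
      by (metis diff_add_cancel add.commute rangeI)
  qed
  then have "invertible g"
    using invertible_right_inverse matrix_right_invertible_surjective by blast
  with g_image g_kernel show ?thesis
    using that by blast
qed

definition similar :: "('a::field)^'n^'n \<Rightarrow> 'a^'n^'n \<Rightarrow> bool" where
  "similar X Y \<longleftrightarrow> (\<exists>g. invertible g \<and> Y ** g = g ** X)"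

lemma similar_stable_parts_of_intertwiner:
  fixes A B y :: "('a::field)^'n^'n"
  assumes image: "(*v) y ` stable_image A = stable_image B"
    and inj: "inj_on ((*v) y) (stable_image A)"
    and intertwine: "y ** A = B ** y"
  shows "similar (stable_part A) (stable_part B)"
proof -
  have "vec.dim (stable_image B) = vec.dim (stable_image A)"
    using dim_image_matrix_inj_on[OF subspace_stable_image inj] image by simp
  then have "vec.dim (stable_kernel A) = vec.dim (stable_kernel B)"
    using dim_stable_image_add_dim_stable_kernel[of A] dim_stable_image_add_dim_stable_kernel[of B]
    by linarith
  then obtain H where H: "(*v) H ` stable_kernel A = stable_kernel B"
    using matrix_maps_subspace_onto subspace_stable_kernel by blast
  obtain g where g: "invertible g"
    and g_image: "\<And>u. u \<in> stable_image A \<Longrightarrow> g *v u = y *v u"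
    and g_kernel: "\<And>k. k \<in> stable_kernel A \<Longrightarrow> g *v k = H *v k"
    using glue_on_fitting_decomposition[OF image H] by blast
  have "stable_part B ** g = g ** stable_part A"
  proof (rule matrix_eq_on_fitting_decomposition[of A])
    fix u
    assume u: "u \<in> stable_image A"
    then have "y *v u \<in> stable_image B"
      using image by blast
    then have "(stable_part B ** g) *v u = B *v (y *v u)"
      by (simp add: g_image[OF u] stable_part_on_image matrix_vector_mul_assoc[symmetric])
    also have "\<dots> = y *v (A *v u)"
      using intertwine by (metis matrix_vector_mul_assoc)
    also have "\<dots> = (g ** stable_part A) *v u"
      by (simp add: u g_image[OF stable_image_invariant[OF u]] stable_part_on_image
          matrix_vector_mul_assoc[symmetric])
    finally show "(stable_part B ** g) *v u = (g ** stable_part A) *v u" .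
  next
    fix k
    assume k: "k \<in> stable_kernel A"
    then have "H *v k \<in> stable_kernel B"
      using H by blast
    then show "(stable_part B ** g) *v k = (g ** stable_part A) *v k"
      by (simp add: k g_kernel stable_part_on_kernel matrix_vector_mul_assoc[symmetric] vec.zero)
  qed
  with g show ?thesis
    unfolding similar_def by blast
qed

lemma primary_conj_imp_similar_stable_parts:
  fixes A B :: "('a::field)^'n^'n"
  assumes "primary_conj A B"
  shows "similar (stable_part A) (stable_part B)"
proof -
  obtain x y where "A = x ** y" "B = y ** x"
    using assms primary_conj_def by blast
  then show ?thesis
    using similar_stable_parts_of_intertwiner[OF image_stable_image_mult_swap
        inj_on_stable_image_mult_swap]
    by (simp add: matrix_mul_assoc)
qed

lemma similar_trans: "similar X Y \<Longrightarrow> similar Y Z \<Longrightarrow> similar X Z"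
  unfolding similar_def by (metis invertible_mult matrix_mul_assoc)

lemma invertible_matrix_inv:
  "invertible g \<Longrightarrow> g ** matrix_inv g = mat 1 \<and> matrix_inv g ** g = mat 1"
  unfolding invertible_def matrix_inv_def by (rule someI_ex)

lemma similar_iff_conjugate:
  "similar X Y \<longleftrightarrow> (\<exists>g. invertible g \<and> Y = g ** X ** matrix_inv g)"
  unfolding similar_def by (metis invertible_matrix_inv matrix_mul_assoc matrix_mul_rid)

lemma similar_imp_primary_conj:
  assumes "similar X Y"
  shows "primary_conj X Y"
proof -
  obtain g where g: "invertible g" "Y = g ** X ** matrix_inv g"
    using assms similar_iff_conjugate by blast
  then have "X = matrix_inv g ** (g ** X)"
    using invertible_matrix_inv by (metis matrix_mul_assoc matrix_mul_lid)
  with g(2) show ?thesis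
    unfolding primary_conj_def by blast
qed

theorem theorem1:
  fixes A B :: "('a::field)^'n^'n"
  shows "mconj A B \<longleftrightarrow>
    (\<exists>g :: 'a^'n^'n. invertible g \<and> stable_part B = g ** stable_part A ** matrix_inv g)"
proof -
  have "mconj A B \<longleftrightarrow> similar (stable_part A) (stable_part B)"
  proof
    assume "mconj A B"
    then show "similar (stable_part A) (stable_part B)"
      unfolding mconj_def
      by (induction rule: tranclp_induct)
        (blast intro: similar_trans primary_conj_imp_similar_stable_parts)+
  next
    assume "similar (stable_part A) (stable_part B)"
    then have "primary_conj (stable_part A) (stable_part B)"
      by (rule similar_imp_primary_conj)
    then show "mconj A B"
      unfolding mconj_def
      using primary_conj_stable_part[of A]
        primary_conj_rtranclp_sym[OF primary_conj_stable_part[of B]]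
      by (meson rtranclp_into_tranclp1 tranclp_rtranclp_tranclp)
  qed
  then show ?thesis
    by (simp add: similar_iff_conjugate)
qed

end
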